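(* Let $b$ be a graph over a countable set $X$ and let $x,y,z\in X$. The following statements are equivalent: (i) $R(x,z)=R(x,y)+R(y,z)$. (ii) All paths from $x$ to $z$ (in the graph $b$) pass through $y$.
   Context: A graph over a countable set $X$ is a symmetric map $b:X\times X\to[0,\infty)$ with $b(x,x)=0$ for all $x$ and $\sum_{y\in X}b(x,y)<\infty$ for every $x\in X$. A path in $b$ from $x$ to $z$ is a sequence of distinct vertices $(x_0,\dots,x_n)$ with $x_0=x$, $x_n=z$ and $b(x_{i-1},x_i)>0$ for all $i$. For $f:X\to\mathbb R$ let $Q(f):=\frac12\sum_{x,y\in X}b(x,y)(f(x)-f(y))^2\in[0,\infty]$. The resistance metric is $R(x,y):=\sup\{(f(y)-f(x))^2\mid f:X\to\mathbb R,\ Q(f)=1\}$. *)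

theory Defs
  imports "HOL-Analysis.Analysis"
begin

definition is_graph :: "('a::countable \<Rightarrow> 'a \<Rightarrow> real) \<Rightarrow> bool" where
  "is_graph b \<longleftrightarrow> (\<forall>x y. b x y = b y x) \<and> (\<forall>x y. 0 \<le> b x y) \<and> (\<forall>x. b x x = 0)
     \<and> (\<forall>x. (\<lambda>y. b x y) summable_on UNIV)"

definition is_path :: "('a \<Rightarrow> 'a \<Rightarrow> real) \<Rightarrow> 'a \<Rightarrow> 'a \<Rightarrow> 'a list \<Rightarrow> bool" where
  "is_path b x z p \<longleftrightarrow> p \<noteq> [] \<and> hd p = x \<and> last p = z \<and> distinct p
     \<and> (\<forall>i. Suc i < length p \<longrightarrow> 0 < b (p ! i) (p ! Suc i))"

definition energy :: "('a \<Rightarrow> 'a \<Rightarrow> real) \<Rightarrow> ('a \<Rightarrow> real) \<Rightarrow> ennreal" where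
  "energy b f = (\<Sum>\<^sub>\<infinity>(x, y)\<in>UNIV. ennreal (b x y * (f x - f y)\<^sup>2)) / 2"

definition resistance :: "('a \<Rightarrow> 'a \<Rightarrow> real) \<Rightarrow> 'a \<Rightarrow> 'a \<Rightarrow> ennreal" where
  "resistance b x y = (SUP f \<in> {f. energy b f = 1}. ennreal ((f y - f x)\<^sup>2))"

end

theory Submission
  imports Defs
begin

text \<open>If every path from \<open>x\<close> to \<open>z\<close> passes through \<open>y\<close>, the vertices reachable from \<open>x\<close> without
  visiting \<open>y\<close> form a set \<open>A\<close> that edges leave only towards \<open>y\<close>. A unit-energy test function for
  \<open>R(x,y)\<close> on \<open>A\<close> and one for \<open>R(y,z)\<close> off \<open>A\<close>, both shifted to vanish at \<open>y\<close>, can then be glued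
  without energy across the cut, which gives \<open>R(x,y) + R(y,z) \<le> R(x,z)\<close>; the reverse inequality
  always holds, by truncating a test function for \<open>R(x,z)\<close> at its value at \<open>y\<close>.

  Conversely, let \<open>R(x,z) = a + c\<close> with \<open>a = R(x,y)\<close>, \<open>c = R(y,z)\<close>, and let a path from \<open>x\<close> to \<open>z\<close>
  avoid \<open>y\<close>. Take a potential \<open>f\<close> with \<open>f x = 0\<close>, \<open>f z = 1\<close> and energy below \<open>1 / (a + c) + \<epsilon>\<close>,
  and truncate it to \<open>[0, s]\<close>, \<open>s = f y\<close>. The equality case of the series law forces \<open>s \<approx> a / (a + c)\<close>
  and makes the truncation an \<open>\<epsilon>\<close>-minimiser of the energy for its values at \<open>x\<close> and \<open>y\<close>, with
  maximum \<open>s\<close> attained at \<open>z\<close>. An \<open>\<epsilon>\<close>-minimiser is \<open>O(\<surd>\<epsilon>)\<close>-harmonic off \<open>x\<close> and \<open>y\<close>, so a discrete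
  maximum principle along the path from \<open>z\<close> to \<open>x\<close> keeps it within \<open>O(\<surd>\<epsilon>)\<close> of \<open>s\<close>; as it
  vanishes at \<open>x\<close>, \<open>s = O(\<surd>\<epsilon>)\<close>, a contradiction for small \<open>\<epsilon>\<close>. Working with \<open>\<epsilon>\<close>-minimisers
  avoids the question whether energy minimisers exist on an infinite graph.\<close>

lemma clamp_real: "clamp a b (x::real) = max a (min b x)"
  unfolding clamp_def Basis_real_def by auto

lemma summable_on_ennreal_valued [simp]: "(f :: 'b \<Rightarrow> ennreal) summable_on A"
  by (simp add: nonneg_summable_on_complete)

lemma single_le_infsum_ennreal:
  fixes f :: "'b \<Rightarrow> ennreal"
  assumes "x \<in> A"
  shows "f x \<le> infsum f A"
  using infsum_mono_neutral[of f "{x}" f A] assms by simp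

lemma infsum_cmult_right_ennreal:
  fixes f :: "'b \<Rightarrow> ennreal"
  shows "(\<Sum>\<^sub>\<infinity>x\<in>A. c * f x) = c * infsum f A"
proof -
  have "(\<Sum>\<^sub>\<infinity>x\<in>A. c * f x) = (SUP F\<in>{F. finite F \<and> F \<subseteq> A}. c * sum f F)"
    by (subst nonneg_infsum_complete) (simp_all add: sum_distrib_left)
  also have "\<dots> = c * infsum f A"
    by (subst nonneg_infsum_complete[of A f]) (simp_all add: SUP_mult_left_ennreal)
  finally show ?thesis .
qed

lemma infsum_ennreal:
  fixes f :: "'b \<Rightarrow> real"
  assumes "f summable_on A" "\<And>x. x \<in> A \<Longrightarrow> 0 \<le> f x"
  shows "(\<Sum>\<^sub>\<infinity>x\<in>A. ennreal (f x)) = ennreal (infsum f A)"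
proof -
  have "ennreal (infsum f A) = infsum (ennreal \<circ> f) A"
    by (rule infsum_comm_additive_general[symmetric]) (auto simp: assms sum_ennreal subsetD)
  then show ?thesis by (simp add: comp_def)
qed

lemma enn2real_add_le_if_add_le:
  fixes X Y :: ennreal
  assumes "X + Y \<le> ennreal r" "0 \<le> r"
  shows "X < \<infinity>" "Y < \<infinity>" "enn2real X + enn2real Y \<le> r"
proof -
  show X: "X < \<infinity>" and Y: "Y < \<infinity>"
    using assms(1) by (auto simp: top_unique less_top[symmetric])
  have "enn2real (X + Y) \<le> r" using enn2real_mono[OF assms(1)] assms(2) by simp
  then show "enn2real X + enn2real Y \<le> r" using X Y by (simp add: enn2real_plus)
qed

lemma sq_diff_clamp_split_le:
  fixes l s u A B :: real
  assumes "l \<le> s" "s \<le> u"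
  shows "(clamp l s A - clamp l s B)\<^sup>2 + (clamp s u A - clamp s u B)\<^sup>2 \<le> (A - B)\<^sup>2"
proof -
  define p where "p = clamp l s A - clamp l s B"
  define q where "q = clamp s u A - clamp s u B"
  have "0 \<le> p * q"
    unfolding p_def q_def clamp_real
    by (cases "A \<le> B") (auto simp: max_def min_def zero_le_mult_iff)
  moreover have "\<bar>p + q\<bar> \<le> \<bar>A - B\<bar>"
    unfolding p_def q_def clamp_real using assms by (auto simp: max_def min_def)
  then have "(p + q)\<^sup>2 \<le> (A - B)\<^sup>2" by (simp add: abs_le_square_iff)
  ultimately show ?thesis
    unfolding p_def[symmetric] q_def[symmetric] by (simp add: power2_sum)
qed

lemma sq_add_le_of_sq_le_mult:
  fixes d1 d2 a c q1 q2 :: real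
  assumes "d1\<^sup>2 \<le> a * q1" "d2\<^sup>2 \<le> c * q2" "0 \<le> a" "0 \<le> c" "0 \<le> q1" "0 \<le> q2"
  shows "(d1 + d2)\<^sup>2 \<le> (a + c) * (q1 + q2)"
proof -
  have "(2 * d1 * d2)\<^sup>2 \<le> 4 * (a * q1) * (c * q2)"
    using assms by (simp add: power_mult_distrib mult_mono)
  also have "\<dots> \<le> (a * q2 + c * q1)\<^sup>2"
    using sum_squares_ge_zero[of "a * q2 - c * q1" 0] by (simp add: power2_eq_square algebra_simps)
  finally have "2 * d1 * d2 \<le> a * q2 + c * q1"
    using assms by (simp add: abs_le_square_iff[symmetric])
  then show ?thesis using assms(1,2) by (simp add: power2_sum algebra_simps)
qed

text \<open>If a potential drop 1 is split as \<open>s + (1 - s)\<close> over two resistors \<open>a\<close> and \<open>c\<close> in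
  series, the energy exceeds the optimum \<open>1 / (a + c)\<close> by \<open>((a + c) s - a)\<^sup>2 / (a c (a + c))\<close>.\<close>
lemma series_split_near_optimal:
  fixes a c s q1 q2 \<epsilon> :: real
  assumes "0 < a" "0 < c" "s\<^sup>2 \<le> a * q1" "(1 - s)\<^sup>2 \<le> c * q2"
    and "q1 + q2 < 1 / (a + c) + \<epsilon>"
  shows "q1 \<le> s\<^sup>2 / a + \<epsilon>" "((a + c) * s - a)\<^sup>2 \<le> \<epsilon> * (a * c * (a + c))"
proof -
  have q1: "s\<^sup>2 / a \<le> q1" and q2: "(1 - s)\<^sup>2 / c \<le> q2"
    using assms by (simp_all add: pos_divide_le_eq mult.commute)
  have defect: "s\<^sup>2 / a + (1 - s)\<^sup>2 / c - 1 / (a + c) = ((a + c) * s - a)\<^sup>2 / (a * c * (a + c))"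
    using assms(1,2) by (simp add: field_simps power2_eq_square)
  have "0 \<le> ((a + c) * s - a)\<^sup>2 / (a * c * (a + c))" using assms by simp
  then show "q1 \<le> s\<^sup>2 / a + \<epsilon>" using q1 q2 defect assms(5) by linarith
  have "((a + c) * s - a)\<^sup>2 / (a * c * (a + c)) \<le> \<epsilon>" using q1 q2 defect assms(5) by linarith
  then show "((a + c) * s - a)\<^sup>2 \<le> \<epsilon> * (a * c * (a + c))"
    using assms by (simp add: pos_divide_le_eq)
qed

locale weighted_graph =
  fixes b :: "'a::countable \<Rightarrow> 'a \<Rightarrow> real"
  assumes is_graph: "is_graph b"
begin

lemma weight_sym: "b u v = b v u"
  using is_graph unfolding is_graph_def by blast

lemma weight_nonneg: "0 \<le> b u v"
  using is_graph unfolding is_graph_def by blast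

lemma weight_loop [simp]: "b u u = 0"
  using is_graph unfolding is_graph_def by blast

lemma weight_summable: "(\<lambda>v. b u v) summable_on UNIV"
  using is_graph unfolding is_graph_def by blast

abbreviation Q :: "('a \<Rightarrow> real) \<Rightarrow> ennreal" where "Q \<equiv> energy b"

abbreviation R :: "'a \<Rightarrow> 'a \<Rightarrow> ennreal" where "R \<equiv> resistance b"

lemma energy_eq_pair_sum:
  "Q f = (\<Sum>\<^sub>\<infinity>p\<in>UNIV. ennreal (b (fst p) (snd p) * (f (fst p) - f (snd p))\<^sup>2)) / 2"
  unfolding energy_def case_prod_unfold ..

lemma energy_scale: "Q (\<lambda>v. c * f v + k) = ennreal (c\<^sup>2) * Q f"
proof -
  have "b u v * (c * f u + k - (c * f v + k))\<^sup>2 = c\<^sup>2 * (b u v * (f u - f v)\<^sup>2)" for u v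
    by (simp add: power2_eq_square algebra_simps)
  then have "ennreal (b u v * (c * f u + k - (c * f v + k))\<^sup>2) = ennreal (c\<^sup>2) * ennreal (b u v * (f u - f v)\<^sup>2)"
    for u v
    by (metis ennreal_mult weight_nonneg zero_le_power2 mult_nonneg_nonneg)
  then show ?thesis
    unfolding energy_eq_pair_sum by (simp add: infsum_cmult_right_ennreal ennreal_times_divide)
qed

lemma energy_cmult: "Q (\<lambda>v. c * f v) = ennreal (c\<^sup>2) * Q f"
  using energy_scale[of c f 0] by simp

lemma energy_add_le:
  assumes "\<And>u v. b u v * (g u - g v)\<^sup>2 + b u v * (h u - h v)\<^sup>2 \<le> b u v * (f u - f v)\<^sup>2"
  shows "Q g + Q h \<le> Q f"
proof -
  let ?t = "\<lambda>f p. ennreal (b (fst p) (snd p) * (f (fst p) - f (snd p))\<^sup>2)"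
  have "infsum (?t g) UNIV + infsum (?t h) UNIV = (\<Sum>\<^sub>\<infinity>p\<in>UNIV. ?t g p + ?t h p)"
    by (rule infsum_add[symmetric]) simp_all
  also have "\<dots> \<le> infsum (?t f) UNIV"
  proof (rule infsum_mono)
    fix p :: "'a \<times> 'a"
    show "?t g p + ?t h p \<le> ?t f p"
      using assms[of "fst p" "snd p"] by (simp add: weight_nonneg ennreal_plus[symmetric] del: ennreal_plus)
  qed simp_all
  finally show ?thesis
    unfolding energy_eq_pair_sum add_divide_distrib_ennreal[symmetric] by (rule divide_right_mono_ennreal)
qed

lemma energy_le_lincomb:
  assumes "0 \<le> \<alpha>" "0 \<le> \<beta>"
    and "\<And>u v. b u v * (h u - h v)\<^sup>2 \<le> \<alpha> * (b u v * (f u - f v)\<^sup>2) + \<beta> * (b u v * (g u - g v)\<^sup>2)"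
  shows "Q h \<le> ennreal \<alpha> * Q f + ennreal \<beta> * Q g"
proof -
  let ?t = "\<lambda>f p. ennreal (b (fst p) (snd p) * (f (fst p) - f (snd p))\<^sup>2)"
  have "infsum (?t h) UNIV \<le> (\<Sum>\<^sub>\<infinity>p\<in>UNIV. ennreal \<alpha> * ?t f p + ennreal \<beta> * ?t g p)"
  proof (rule infsum_mono)
    fix p :: "'a \<times> 'a"
    show "?t h p \<le> ennreal \<alpha> * ?t f p + ennreal \<beta> * ?t g p"
      using assms(1,2) ennreal_leI[OF assms(3)[of "fst p" "snd p"]]
      by (simp add: weight_nonneg ennreal_mult[symmetric] ennreal_plus[symmetric] del: ennreal_plus)
  qed simp_all
  also have "\<dots> = ennreal \<alpha> * infsum (?t f) UNIV + ennreal \<beta> * infsum (?t g) UNIV"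
    by (simp add: infsum_add infsum_cmult_right_ennreal)
  finally show ?thesis
    unfolding energy_eq_pair_sum ennreal_times_divide add_divide_distrib_ennreal[symmetric]
    by (rule divide_right_mono_ennreal)
qed

definition vertex_energy :: "('a \<Rightarrow> real) \<Rightarrow> 'a \<Rightarrow> ennreal" where
  "vertex_energy f u = (\<Sum>\<^sub>\<infinity>w\<in>UNIV. ennreal (b u w * (f u - f w)\<^sup>2))"

definition energy_off :: "('a \<Rightarrow> real) \<Rightarrow> 'a \<Rightarrow> ennreal" where
  "energy_off f u =
     (\<Sum>\<^sub>\<infinity>p\<in>{p. fst p \<noteq> u \<and> snd p \<noteq> u}. ennreal (b (fst p) (snd p) * (f (fst p) - f (snd p))\<^sup>2)) / 2"

lemma energy_split: "Q f = energy_off f u + vertex_energy f u"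
proof -
  define t where "t p = ennreal (b (fst p) (snd p) * (f (fst p) - f (snd p))\<^sup>2)" for p
  define Off where "Off = {p::'a \<times> 'a. fst p \<noteq> u \<and> snd p \<noteq> u}"
  define From where "From = Pair u ` (UNIV :: 'a set)"
  define To where "To = (\<lambda>w. (w, u)) ` (- {u})"
  have partition: "UNIV = Off \<union> (From \<union> To)"
    and disjoint: "Off \<inter> (From \<union> To) = {}" "From \<inter> To = {}"
    unfolding Off_def From_def To_def by auto
  have "infsum t UNIV = infsum t Off + (infsum t From + infsum t To)"
    unfolding partition by (simp add: infsum_Un_disjoint disjoint)
  moreover have "infsum t From = vertex_energy f u"
    unfolding From_def vertex_energy_def by (subst infsum_reindex) (auto simp: t_def comp_def inj_on_def)
  moreover have "infsum t To = vertex_energy f u"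
  proof -
    have "infsum t To = (\<Sum>\<^sub>\<infinity>w\<in>- {u}. ennreal (b u w * (f u - f w)\<^sup>2))"
      unfolding To_def
      by (subst infsum_reindex) (auto simp: inj_on_def t_def comp_def weight_sym[of _ u] power2_commute)
    also have "\<dots> = vertex_energy f u"
      unfolding vertex_energy_def by (rule infsum_cong_neutral) auto
    finally show ?thesis .
  qed
  ultimately have "infsum t UNIV = infsum t Off + vertex_energy f u * 2"
    by (simp add: mult_2_right)
  then show ?thesis
    unfolding energy_eq_pair_sum energy_off_def t_def[symmetric] Off_def[symmetric]
    by (simp add: add_divide_distrib_ennreal ennreal_mult_divide_eq)
qed

lemma edge_energy_le_energy: "ennreal (b u v * (f u - f v)\<^sup>2) \<le> Q f"
proof -
  have "ennreal (b u v * (f u - f v)\<^sup>2) \<le> vertex_energy f u"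
    unfolding vertex_energy_def by (rule single_le_infsum_ennreal) simp
  also have "\<dots> \<le> Q f" unfolding energy_split[of f u] by simp
  finally show ?thesis .
qed

lemma energy_eq_0_imp_edge_eq:
  assumes "Q g = 0" "0 < b u v"
  shows "g u = g v"
proof -
  have "b u v * (g u - g v)\<^sup>2 \<le> 0"
    using edge_energy_le_energy[of u v g] assms(1) by (simp add: ennreal_eq_0_iff)
  with assms(2) show ?thesis by (simp add: mult_le_0_iff)
qed

lemma energy_add_null:
  assumes "Q g = 0"
  shows "Q (\<lambda>v. f v + g v) = Q f"
proof -
  have edge: "b u v * (f u + g u - (f v + g v))\<^sup>2 = b u v * (f u - f v)\<^sup>2" for u v
    using energy_eq_0_imp_edge_eq[OF assms, of u v] weight_nonneg[of u v]
    by (cases "b u v = 0") auto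
  show ?thesis unfolding energy_def edge ..
qed

definition deg :: "'a \<Rightarrow> real" where
  "deg u = (\<Sum>\<^sub>\<infinity>w\<in>UNIV. b u w)"

lemma deg_nonneg: "0 \<le> deg u"
  unfolding deg_def by (rule infsum_nonneg) (simp add: weight_nonneg)

lemma weight_le_deg: "b u v \<le> deg u"
  unfolding deg_def using finite_sum_le_infsum[of "b u" UNIV "{v}"] weight_summable weight_nonneg by simp

lemma energy_indicator: "Q (indicator {u}) = ennreal (deg u)"
proof -
  have "energy_off (indicator {u}) u = 0"
    unfolding energy_off_def by (subst infsum_0) (auto simp: indicator_def)
  moreover have "vertex_energy (indicator {u}) u = (\<Sum>\<^sub>\<infinity>w\<in>UNIV. ennreal (b u w))"
    unfolding vertex_energy_def by (rule infsum_cong) (simp add: indicator_def)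
  ultimately show ?thesis
    unfolding energy_split[of _ u] deg_def by (simp add: infsum_ennreal weight_summable weight_nonneg)
qed

lemma le_resistance: "Q f = 1 \<Longrightarrow> ennreal ((f y - f x)\<^sup>2) \<le> R x y"
  unfolding resistance_def by (rule SUP_upper) simp

lemma resistance_le: "(\<And>f. Q f = 1 \<Longrightarrow> ennreal ((f y - f x)\<^sup>2) \<le> r) \<Longrightarrow> R x y \<le> r"
  unfolding resistance_def by (rule SUP_least) simp

lemma resistance_refl [simp]: "R x x = 0"
  using resistance_le[of x x 0] by simp

lemma sq_diff_le_resistance_mult_energy:
  assumes "0 < Q g" "Q g < \<infinity>"
  shows "ennreal ((g y - g x)\<^sup>2) \<le> R x y * Q g"
proof -
  obtain q where q: "Q g = ennreal q" "0 < q"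
    using assms by (cases "Q g") (auto simp: ennreal_less_top)
  define h where "h v = (1 / sqrt q) * g v" for v
  have "Q h = ennreal ((1 / sqrt q)\<^sup>2) * Q g"
    unfolding h_def by (rule energy_cmult)
  also have "\<dots> = 1"
    using q by (simp add: ennreal_mult[symmetric] power_divide)
  finally have "ennreal ((g y - g x)\<^sup>2 / q) \<le> R x y"
    using le_resistance[of h y x] q(2) by (simp add: h_def power_divide diff_divide_distrib[symmetric])
  then have "ennreal ((g y - g x)\<^sup>2 / q) * ennreal q \<le> R x y * ennreal q"
    by (rule mult_right_mono) simp
  then show ?thesis
    using q by (simp add: ennreal_mult[symmetric])
qed

lemma energy_clamp_add_le:
  assumes "l \<le> s" "s \<le> u"
  shows "Q (\<lambda>v. clamp l s (f v)) + Q (\<lambda>v. clamp s u (f v)) \<le> Q f"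
  by (rule energy_add_le)
    (metis distrib_left mult_left_mono sq_diff_clamp_split_le assms weight_nonneg)

lemma is_path_singleton: "is_path b x x [x]"
  unfolding is_path_def by simp

lemma is_path_snoc:
  assumes p: "is_path b x u p" and "v \<notin> set p" "0 < b u v"
  shows "is_path b x v (p @ [v])"
  unfolding is_path_def
proof (intro conjI allI impI)
  show "p @ [v] \<noteq> []" "last (p @ [v]) = v" by simp_all
  show "hd (p @ [v]) = x" "distinct (p @ [v])" using p assms(2) unfolding is_path_def by simp_all
  fix j assume j: "Suc j < length (p @ [v])"
  show "0 < b ((p @ [v]) ! j) ((p @ [v]) ! Suc j)"
  proof (cases "Suc j < length p")
    case True
    then show ?thesis using p unfolding is_path_def by (simp add: nth_append)
  next
    case False
    then have "j = length p - 1" "Suc j = length p" using j by simp_all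
    moreover have "p ! (length p - 1) = u" using p unfolding is_path_def by (metis last_conv_nth)
    ultimately show ?thesis using assms(3) by (simp add: nth_append)
  qed
qed

lemma is_path_take:
  assumes p: "is_path b x z p" and "i < length p"
  shows "is_path b x (p ! i) (take (Suc i) p)"
  unfolding is_path_def
proof (intro conjI allI impI)
  show "take (Suc i) p \<noteq> []" "hd (take (Suc i) p) = x" "distinct (take (Suc i) p)"
    using assms unfolding is_path_def by auto
  show "last (take (Suc i) p) = p ! i" using assms(2) by (simp add: take_Suc_conv_app_nth)
  fix j assume "Suc j < length (take (Suc i) p)"
  then show "0 < b (take (Suc i) p ! j) (take (Suc i) p ! Suc j)"
    using p unfolding is_path_def by auto
qed

lemma is_path_extend_avoiding:
  assumes p: "is_path b x u p" "y \<notin> set p" and "0 < b u v" "v \<noteq> y"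
  shows "\<exists>q. is_path b x v q \<and> y \<notin> set q"
proof (cases "v \<in> set p")
  case True
  then obtain i where "i < length p" "p ! i = v" by (auto simp: in_set_conv_nth)
  then show ?thesis using is_path_take[OF p(1)] p(2) by (metis in_set_takeD)
next
  case False
  then show ?thesis using is_path_snoc[OF p(1) False \<open>0 < b u v\<close>] p(2) \<open>v \<noteq> y\<close> by auto
qed

lemma is_path_rev:
  assumes p: "is_path b x z p"
  shows "is_path b z x (rev p)"
  unfolding is_path_def
proof (intro conjI allI impI)
  show "rev p \<noteq> []" "hd (rev p) = z" "last (rev p) = x" "distinct (rev p)"
    using p unfolding is_path_def by (auto simp: hd_rev last_rev)
  fix j assume j: "Suc j < length (rev p)"
  define i where "i = length p - 2 - j"
  have i: "Suc i < length p" "rev p ! j = p ! Suc i" "rev p ! Suc j = p ! i"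
    using j unfolding i_def by (auto simp: rev_nth Suc_diff_Suc numeral_2_eq_2)
  then show "0 < b (rev p ! j) (rev p ! Suc j)"
    using p unfolding is_path_def by (simp add: weight_sym)
qed

lemma resistance_finite_if_path:
  assumes p: "is_path b x z p"
  shows "R x z < \<infinity>"
proof -
  define n where "n = length p - 1"
  have ends: "p ! 0 = x" "p ! n = z"
    using p unfolding is_path_def n_def by (auto simp: hd_conv_nth last_conv_nth)
  define C where "C = (\<Sum>j<n. 1 / sqrt (b (p ! j) (p ! Suc j)))"
  have "R x z \<le> ennreal (C\<^sup>2)"
  proof (intro resistance_le ennreal_leI)
    fix f assume f: "Q f = 1"
    have step: "\<bar>f (p ! Suc j) - f (p ! j)\<bar> \<le> 1 / sqrt (b (p ! j) (p ! Suc j))" if "j < n" for j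
    proof -
      have edge: "0 < b (p ! j) (p ! Suc j)"
        using p that unfolding is_path_def n_def by simp
      have "b (p ! j) (p ! Suc j) * (f (p ! Suc j) - f (p ! j))\<^sup>2 \<le> 1"
        using edge_energy_le_energy[of "p ! j" "p ! Suc j" f] f by (simp add: power2_commute)
      then have "(f (p ! Suc j) - f (p ! j))\<^sup>2 \<le> (1 / sqrt (b (p ! j) (p ! Suc j)))\<^sup>2"
        using edge by (simp add: power_divide pos_le_divide_eq mult.commute)
      then show ?thesis
        using edge by (simp add: abs_le_square_iff[symmetric])
    qed
    have "f z - f x = (\<Sum>j<n. f (p ! Suc j) - f (p ! j))"
      using sum_lessThan_telescope[of "\<lambda>j. f (p ! j)" n] ends by simp
    then have "\<bar>f z - f x\<bar> \<le> C"
      unfolding C_def by (metis (no_types, lifting) sum_abs order_trans sum_mono step lessThan_iff)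
    from power_mono[OF this abs_ge_zero, of 2] show "(f z - f x)\<^sup>2 \<le> C\<^sup>2" by simp
  qed
  then show ?thesis by (rule le_less_trans) simp
qed

lemma summable_weight_mult_bounded:
  assumes "\<And>w. \<bar>\<phi> w\<bar> \<le> M"
  shows "(\<lambda>w. b v w * \<phi> w) summable_on UNIV"
proof -
  have "(\<lambda>w. b v w * (\<phi> w + M) + (- M) * b v w) summable_on UNIV"
  proof (rule summable_on_add)
    show "(\<lambda>w. b v w * (\<phi> w + M)) summable_on UNIV"
    proof (rule summable_on_comparison_test[OF summable_on_cmult_right[OF weight_summable, of "2 * M"]])
      fix w
      show "b v w * (\<phi> w + M) \<le> 2 * M * b v w" "0 \<le> b v w * (\<phi> w + M)"
        using assms[of w] weight_nonneg[of v w] by (auto simp: mult.commute intro: mult_left_mono)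
    qed
  qed (rule summable_on_cmult_right[OF weight_summable])
  then show ?thesis by (simp add: algebra_simps)
qed

lemma vertex_energy_eq_if_has_sum:
  assumes "((\<lambda>w. b v w * (f v - f w)\<^sup>2) has_sum M) UNIV"
  shows "vertex_energy f v = ennreal M"
proof -
  have "vertex_energy f v = ennreal (\<Sum>\<^sub>\<infinity>w\<in>UNIV. b v w * (f v - f w)\<^sup>2)"
    unfolding vertex_energy_def using assms
    by (intro infsum_ennreal) (auto simp: summable_on_def weight_nonneg)
  then show ?thesis using assms by (simp add: infsumI)
qed

definition laplacian :: "('a \<Rightarrow> real) \<Rightarrow> 'a \<Rightarrow> real" where
  "laplacian g v = (\<Sum>\<^sub>\<infinity>w\<in>UNIV. b v w * (g v - g w))"

definition near_minimiser :: "real \<Rightarrow> 'a \<Rightarrow> 'a \<Rightarrow> ('a \<Rightarrow> real) \<Rightarrow> bool" where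
  "near_minimiser \<epsilon> x y g \<longleftrightarrow>
     Q g < \<infinity> \<and> (\<forall>h. h x = g x \<longrightarrow> h y = g y \<longrightarrow> Q g \<le> Q h + ennreal \<epsilon>)"

lemma vertex_energy_shift_by_laplacian:
  assumes "\<And>w. \<bar>g w\<bar> \<le> M" "0 < deg v"
  defines "t \<equiv> laplacian g v / deg v"
  shows "vertex_energy g v = vertex_energy (g(v := g v - t)) v + ennreal ((laplacian g v)\<^sup>2 / deg v)"
proof -
  define S where "S = laplacian g v"
  define D where "D = deg v"
  have "\<bar>g v - g w\<bar> \<le> 2 * M" for w using assms(1)[of v] assms(1)[of w] by linarith
  then have "\<bar>(g v - g w)\<^sup>2\<bar> \<le> (2 * M)\<^sup>2" for w
    using power_mono[OF _ abs_ge_zero, of "g v - g w" "2 * M" 2] by simp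
  then obtain N where N: "((\<lambda>w. b v w * (g v - g w)\<^sup>2) has_sum N) UNIV"
    using summable_weight_mult_bounded[of "\<lambda>w. (g v - g w)\<^sup>2"] unfolding summable_on_def by blast
  have S: "((\<lambda>w. b v w * (g v - g w)) has_sum S) UNIV"
    unfolding S_def laplacian_def
    using summable_weight_mult_bounded[OF \<open>\<And>w. \<bar>g v - g w\<bar> \<le> 2 * M\<close>] by (rule has_sum_infsum)
  have D: "((\<lambda>w. b v w) has_sum D) UNIV"
    unfolding D_def deg_def using weight_summable by (rule has_sum_infsum)
  have expanded: "((\<lambda>w. b v w * (g v - g w)\<^sup>2 + (- 2 * t) * (b v w * (g v - g w)) + t\<^sup>2 * b v w)
          has_sum (N + (- 2 * t) * S + t\<^sup>2 * D)) UNIV"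
    by (intro has_sum_add has_sum_cmult_right N S D)
  have total: "N + (- 2 * t) * S + t\<^sup>2 * D = N - S\<^sup>2 / D"
    using assms(2) by (simp add: t_def S_def D_def power2_eq_square field_simps)
  have shift: "(\<lambda>w. b v w * ((g(v := g v - t)) v - (g(v := g v - t)) w)\<^sup>2)
      = (\<lambda>w. b v w * (g v - g w)\<^sup>2 + (- 2 * t) * (b v w * (g v - g w)) + t\<^sup>2 * b v w)"
    by (auto simp: power2_eq_square algebra_simps)
  have shifted_sum: "((\<lambda>w. b v w * ((g(v := g v - t)) v - (g(v := g v - t)) w)\<^sup>2) has_sum (N - S\<^sup>2 / D)) UNIV"
    using expanded unfolding shift total .
  then have shifted: "vertex_energy (g(v := g v - t)) v = ennreal (N - S\<^sup>2 / D)"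
    by (rule vertex_energy_eq_if_has_sum)
  have "0 \<le> N - S\<^sup>2 / D" "0 \<le> S\<^sup>2 / D"
    using has_sum_nonneg[OF shifted_sum] weight_nonneg \<open>0 < deg v\<close> unfolding D_def by simp_all
  then show ?thesis
    unfolding shifted vertex_energy_eq_if_has_sum[OF N] S_def[symmetric] D_def[symmetric]
    by (simp add: ennreal_plus[symmetric] del: ennreal_plus)
qed

lemma laplacian_sq_le_if_near_minimiser:
  assumes g: "near_minimiser \<epsilon> x y g" "0 \<le> \<epsilon>" "\<And>w. \<bar>g w\<bar> \<le> M"
    and "v \<noteq> x" "v \<noteq> y"
  shows "(laplacian g v)\<^sup>2 \<le> \<epsilon> * deg v"
proof (cases "deg v = 0")
  case True
  then have "b v w = 0" for w using weight_le_deg[of v w] weight_nonneg[of v w] by simp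
  then show ?thesis using True by (simp add: laplacian_def)
next
  case False
  then have "0 < deg v" using deg_nonneg[of v] by simp
  define h where "h = g(v := g v - laplacian g v / deg v)"
  have "energy_off h v = energy_off g v"
    unfolding energy_off_def h_def by (intro arg_cong[where f="\<lambda>t. t / 2"] infsum_cong) auto
  then have "Q g = Q h + ennreal ((laplacian g v)\<^sup>2 / deg v)"
    using energy_split[of g v] energy_split[of h v]
      vertex_energy_shift_by_laplacian[OF g(3) \<open>0 < deg v\<close>] unfolding h_def by (simp add: add.assoc)
  moreover have "Q g \<le> Q h + ennreal \<epsilon>"
    using g(1) \<open>v \<noteq> x\<close> \<open>v \<noteq> y\<close> unfolding near_minimiser_def h_def by auto
  moreover have "Q h \<noteq> \<infinity>"
    using g(1) calculation(1) unfolding near_minimiser_def by auto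
  ultimately have "(laplacian g v)\<^sup>2 / deg v \<le> \<epsilon>"
    using g(2) by (simp add: ennreal_add_left_cancel_le)
  then show ?thesis using \<open>0 < deg v\<close> by (simp add: pos_divide_le_eq mult.commute)
qed

lemma weighted_deficit_le_laplacian:
  assumes "\<And>w. 0 \<le> g w" "\<And>w. g w \<le> s"
  shows "b v w * (s - g w) \<le> laplacian g v + (s - g v) * deg v"
proof -
  have bounded: "\<bar>s - g w\<bar> \<le> s" "\<bar>g v - g w\<bar> \<le> s" for w
    using assms[of w] assms[of v] by auto
  have "((\<lambda>w. (s - g v) * b v w + b v w * (g v - g w)) has_sum ((s - g v) * deg v + laplacian g v)) UNIV"
    unfolding laplacian_def deg_def
    by (intro has_sum_add has_sum_cmult_right has_sum_infsum weight_summable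
        summable_weight_mult_bounded[OF bounded(2)])
  then have "((\<lambda>w. b v w * (s - g w)) has_sum (laplacian g v + (s - g v) * deg v)) UNIV"
    by (simp add: algebra_simps)
  moreover have "b v w * (s - g w) \<le> (\<Sum>\<^sub>\<infinity>w'\<in>UNIV. b v w' * (s - g w'))"
    using finite_sum_le_infsum[of "\<lambda>w'. b v w' * (s - g w')" UNIV "{w}"] assms weight_nonneg
      summable_weight_mult_bounded[OF bounded(1)] by simp
  ultimately show ?thesis by (simp add: infsumI)
qed

text \<open>The recursion is one step of the maximum principle below: at \<open>v = q ! j\<close> and its successor \<open>w\<close>,
  \<open>b v w * (s - g w) \<le> laplacian g v + (s - g v) * deg v\<close> and \<open>laplacian g v \<le> \<surd>\<epsilon> * \<surd>(deg v)\<close>.\<close>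
fun descent_bound :: "'a list \<Rightarrow> nat \<Rightarrow> real" where
  "descent_bound q 0 = 0"
| "descent_bound q (Suc j) = (sqrt (deg (q ! j)) + deg (q ! j) * descent_bound q j) / b (q ! j) (q ! Suc j)"

lemma near_minimiser_max_along_path:
  assumes g: "near_minimiser \<epsilon> x y g" "0 \<le> \<epsilon>" "\<And>w. 0 \<le> g w" "\<And>w. g w \<le> g z"
    and q: "is_path b z x q" "y \<notin> set q"
  shows "j < length q \<Longrightarrow> g z - g (q ! j) \<le> descent_bound q j * sqrt \<epsilon>"
proof (induction j)
  case 0
  then show ?case using q(1) unfolding is_path_def by (simp add: hd_conv_nth[symmetric])
next
  case (Suc j)
  define v where "v = q ! j"
  have edge: "0 < b v (q ! Suc j)" using q(1) Suc.prems unfolding is_path_def v_def by blast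
  have "v \<noteq> x"
  proof
    assume "v = x"
    then have "q ! j = q ! (length q - 1)" using q(1) unfolding is_path_def v_def by (metis last_conv_nth)
    then show False using q(1) Suc.prems unfolding is_path_def by (simp add: nth_eq_iff_index_eq)
  qed
  moreover have "v \<noteq> y" using q(2) Suc.prems unfolding v_def by (metis Suc_lessD nth_mem)
  moreover have "\<bar>g w\<bar> \<le> g z" for w using g(3,4)[of w] by simp
  ultimately have "(laplacian g v)\<^sup>2 \<le> \<epsilon> * deg v"
    using laplacian_sq_le_if_near_minimiser[OF g(1,2)] by blast
  then have "laplacian g v \<le> sqrt \<epsilon> * sqrt (deg v)"
    by (metis real_sqrt_le_mono real_sqrt_mult real_sqrt_abs abs_ge_self order_trans)
  moreover have "(g z - g v) * deg v \<le> descent_bound q j * sqrt \<epsilon> * deg v"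
    using Suc.IH Suc.prems deg_nonneg unfolding v_def by (simp add: mult_right_mono)
  ultimately have "b v (q ! Suc j) * (g z - g (q ! Suc j)) \<le> (sqrt (deg v) + deg v * descent_bound q j) * sqrt \<epsilon>"
    using weighted_deficit_le_laplacian[of g "g z" v "q ! Suc j", OF g(3,4)] by (simp add: algebra_simps)
  then show ?case
    using edge by (simp add: v_def pos_le_divide_eq mult.commute divide_simps)
qed

end

locale nontrivial_graph = weighted_graph +
  assumes has_edge: "\<exists>u v. 0 < b u v"
begin

lemma ex_unit_energy: "\<exists>f. Q f = 1"
proof -
  obtain u v where "0 < b u v" using has_edge by blast
  then have deg: "0 < deg u" using weight_le_deg[of u v] by linarith
  have "Q (\<lambda>w. (1 / sqrt (deg u)) * indicator {u} w) = ennreal ((1 / sqrt (deg u))\<^sup>2) * Q (indicator {u})"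
    by (rule energy_cmult)
  also have "\<dots> = 1"
    using deg by (simp add: energy_indicator ennreal_mult[symmetric] power_divide)
  finally show ?thesis by blast
qed

text \<open>Adding a multiple of an energy-free function that separates \<open>x\<close> and \<open>y\<close> to a unit-energy
  function makes \<open>f y - f x\<close> arbitrarily large.\<close>
lemma resistance_eq_top_if_energy_eq_0:
  assumes "Q g = 0" "g x \<noteq> g y"
  shows "R x y = \<infinity>"
proof -
  obtain f where f: "Q f = 1" using ex_unit_energy by blast
  have "of_nat n \<le> R x y" for n
  proof -
    define t where "t = (sqrt (real n) + \<bar>f y - f x\<bar>) / (g y - g x)"
    define h where "h v = f v + t * g v" for v
    have "Q h = 1"
      unfolding h_def using energy_add_null[of "\<lambda>v. t * g v" f] energy_cmult[of t g] assms(1) f by simp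
    then have "ennreal ((h y - h x)\<^sup>2) \<le> R x y" by (rule le_resistance)
    moreover have "t * (g y - g x) = sqrt (real n) + \<bar>f y - f x\<bar>"
      using assms(2) by (simp add: t_def)
    then have "h y - h x = f y - f x + \<bar>f y - f x\<bar> + sqrt (real n)"
      unfolding h_def by (simp add: algebra_simps)
    then have "sqrt (real n) \<le> h y - h x" by linarith
    then have "(sqrt (real n))\<^sup>2 \<le> (h y - h x)\<^sup>2" by (rule power_mono) simp
    then have "real n \<le> (h y - h x)\<^sup>2" by simp
    ultimately show ?thesis by (metis ennreal_leI order_trans ennreal_of_nat_eq_real_of_nat)
  qed
  then have "(SUP n. of_nat n) \<le> R x y" by (intro SUP_least)
  then show ?thesis by (simp add: ennreal_SUP_of_nat_eq_top top_unique)
qed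

lemma resistance_pos:
  assumes "x \<noteq> y"
  shows "0 < R x y"
proof (cases "deg y = 0")
  case True
  then show ?thesis
    using resistance_eq_top_if_energy_eq_0[of "indicator {y}" x y] assms by (simp add: energy_indicator)
next
  case False
  then have "0 < Q (indicator {y})" using deg_nonneg[of y] by (simp add: energy_indicator)
  then have "ennreal 1 \<le> R x y * Q (indicator {y})"
    using sq_diff_le_resistance_mult_energy[of "indicator {y}" y x] assms by (simp add: energy_indicator)
  then show ?thesis by (auto simp: zero_less_iff_neq_zero)
qed

lemma sq_diff_le_resistance_energy:
  assumes "R x y < \<infinity>" "Q g < \<infinity>"
  shows "(g y - g x)\<^sup>2 \<le> enn2real (R x y) * enn2real (Q g)"
proof (cases "Q g = 0")
  case True
  then have "g x = g y" using resistance_eq_top_if_energy_eq_0 assms(1) by fastforce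
  then show ?thesis by simp
next
  case False
  then have "ennreal ((g y - g x)\<^sup>2) \<le> R x y * Q g"
    using assms(2) by (intro sq_diff_le_resistance_mult_energy) (auto simp: zero_less_iff_neq_zero)
  then have "enn2real (ennreal ((g y - g x)\<^sup>2)) \<le> enn2real (R x y * Q g)"
    using assms by (intro enn2real_mono) (auto simp: ennreal_mult_less_top)
  then show ?thesis by (simp add: enn2real_mult)
qed

lemma ennreal_le_resistance_if_energy_le:
  assumes "Q h \<le> ennreal D" "h z - h x = D"
  shows "ennreal D \<le> R x z"
proof (cases "R x z < \<infinity> \<and> 0 < D")
  case True
  have "D\<^sup>2 \<le> enn2real (R x z) * enn2real (Q h)"
    using sq_diff_le_resistance_energy[of x z h] assms True by (simp add: le_less_trans)
  also have "\<dots> \<le> enn2real (R x z) * D"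
    using assms(1) True by (intro mult_left_mono) (auto simp: enn2real_leI)
  finally have "D \<le> enn2real (R x z)"
    using True by (simp add: power2_eq_square)
  then have "ennreal D \<le> ennreal (enn2real (R x z))" by (rule ennreal_leI)
  also have "\<dots> = R x z" using True by simp
  finally show ?thesis .
next
  case False
  then show ?thesis by (auto simp: less_top[symmetric] ennreal_neg)
qed

lemma resistance_triangle: "R x z \<le> R x y + R y z"
proof (cases "R x y < \<infinity> \<and> R y z < \<infinity>")
  case False
  then show ?thesis by (auto simp: less_top[symmetric])
next
  case True
  define a where "a = enn2real (R x y)"
  define c where "c = enn2real (R y z)"
  have increasing: "(f z - f x)\<^sup>2 \<le> a + c" if f: "Q f = 1" "f x \<le> f z" for f
  proof -
    define s where "s = clamp (f x) (f z) (f y)"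
    have s: "f x \<le> s" "s \<le> f z" using f(2) by (simp_all add: s_def clamp_real)
    define g1 where "g1 v = clamp (f x) s (f v)" for v
    define g2 where "g2 v = clamp s (f z) (f v)" for v
    have "Q g1 + Q g2 \<le> ennreal 1"
      using energy_clamp_add_le[OF s, of f] f(1) unfolding g1_def g2_def by simp
    note parts = enn2real_add_le_if_add_le[OF this]
    have "g1 x = f x" "g1 y = s" "g2 y = s" "g2 z = f z"
      using s by (auto simp: g1_def g2_def s_def clamp_real)
    then have "(s - f x)\<^sup>2 \<le> a * enn2real (Q g1)" "(f z - s)\<^sup>2 \<le> c * enn2real (Q g2)"
      using sq_diff_le_resistance_energy[of x y g1] sq_diff_le_resistance_energy[of y z g2] True parts
      unfolding a_def c_def by simp_all
    then have "((s - f x) + (f z - s))\<^sup>2 \<le> (a + c) * (enn2real (Q g1) + enn2real (Q g2))"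
      by (rule sq_add_le_of_sq_le_mult) (simp_all add: a_def c_def)
    also have "\<dots> \<le> (a + c) * 1"
      using parts(3) by (intro mult_left_mono) (simp_all add: a_def c_def)
    finally show ?thesis by simp
  qed
  have "(f z - f x)\<^sup>2 \<le> a + c" if "Q f = 1" for f
  proof (cases "f x \<le> f z")
    case True
    then show ?thesis using increasing that by blast
  next
    case False
    have "Q (\<lambda>v. - f v) = 1" using energy_cmult[of "-1" f] that by simp
    from increasing[OF this] False show ?thesis by (simp add: power2_commute)
  qed
  then have "R x z \<le> ennreal (a + c)"
    by (intro resistance_le ennreal_leI)
  also have "\<dots> = R x y + R y z"
    using True by (simp add: a_def c_def ennreal_plus less_top)
  finally show ?thesis .
qed

text \<open>Shifted to vanish at \<open>y\<close> and scaled by their drops \<open>d1\<close>, \<open>d2\<close>, the test functions \<open>f1\<close> on \<open>A\<close> and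
  \<open>f2\<close> off \<open>A\<close> glue, as no edge joins \<open>A\<close> to a vertex other than \<open>y\<close> outside it, to a function of
  energy at most \<open>d1\<^sup>2 + d2\<^sup>2\<close> whose drop from \<open>x\<close> to \<open>z\<close> is \<open>d1\<^sup>2 + d2\<^sup>2\<close>.\<close>
lemma sum_sq_le_resistance_if_cut:
  assumes "x \<in> A" "y \<notin> A" "z \<notin> A"
    and cut: "\<And>u v. u \<in> A \<Longrightarrow> 0 < b u v \<Longrightarrow> v \<in> A \<or> v = y"
    and f1: "Q f1 = 1" and f2: "Q f2 = 1"
  shows "ennreal ((f1 y - f1 x)\<^sup>2 + (f2 z - f2 y)\<^sup>2) \<le> R x z"
proof -
  define d1 where "d1 = f1 y - f1 x"
  define d2 where "d2 = f2 z - f2 y"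
  define h where "h v = (if v \<in> A then d1 * (f1 v - f1 y) else d2 * (f2 v - f2 y))" for v
  have inside: "h v = d1 * (f1 v - f1 y)" if "v \<in> A \<or> v = y" for v
    using that \<open>y \<notin> A\<close> by (auto simp: h_def)
  have outside: "h v = d2 * (f2 v - f2 y)" if "v \<notin> A" for v
    using that by (simp add: h_def)
  have "b u v * (h u - h v)\<^sup>2 \<le> d1\<^sup>2 * (b u v * (f1 u - f1 v)\<^sup>2) + d2\<^sup>2 * (b u v * (f2 u - f2 v)\<^sup>2)"
    for u v
  proof -
    have "b u v * (h u - h v)\<^sup>2 = d1\<^sup>2 * (b u v * (f1 u - f1 v)\<^sup>2)
        \<or> b u v * (h u - h v)\<^sup>2 = d2\<^sup>2 * (b u v * (f2 u - f2 v)\<^sup>2)"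
    proof (cases "b u v = 0")
      case False
      then have "0 < b u v" "0 < b v u" using weight_nonneg[of u v] weight_sym[of u v] by auto
      then have "((u \<in> A \<or> u = y) \<and> (v \<in> A \<or> v = y)) \<or> (u \<notin> A \<and> v \<notin> A)"
        using cut[of u v] cut[of v u] \<open>y \<notin> A\<close> by blast
      then show ?thesis
        by (elim disjE conjE) (simp_all add: inside outside power2_eq_square algebra_simps)
    qed simp
    then show ?thesis using weight_nonneg[of u v] by (auto intro: add_increasing add_increasing2)
  qed
  then have "Q h \<le> ennreal (d1\<^sup>2) * Q f1 + ennreal (d2\<^sup>2) * Q f2"
    by (intro energy_le_lincomb) simp_all
  then have "Q h \<le> ennreal (d1\<^sup>2 + d2\<^sup>2)"
    using f1 f2 by (simp add: ennreal_plus)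
  moreover have "h z - h x = d1\<^sup>2 + d2\<^sup>2"
    using \<open>x \<in> A\<close> \<open>z \<notin> A\<close> by (simp add: h_def d1_def d2_def power2_eq_square algebra_simps)
  ultimately show ?thesis
    unfolding d1_def d2_def by (rule ennreal_le_resistance_if_energy_le)
qed

lemma resistance_series:
  assumes "y \<noteq> x" and through: "\<forall>p. is_path b x z p \<longrightarrow> y \<in> set p"
  shows "R x y + R y z \<le> R x z"
proof -
  define A where "A = {v. \<exists>p. is_path b x v p \<and> y \<notin> set p}"
  have "x \<in> A" unfolding A_def using is_path_singleton[of x] assms(1) by auto
  moreover have "y \<notin> A" unfolding A_def is_path_def by (auto dest: last_in_set)
  moreover have "z \<notin> A" unfolding A_def using through by auto
  moreover have "v \<in> A \<or> v = y" if "u \<in> A" "0 < b u v" for u v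
    using that is_path_extend_avoiding unfolding A_def by blast
  ultimately have glue: "ennreal ((f1 y - f1 x)\<^sup>2) + ennreal ((f2 z - f2 y)\<^sup>2) \<le> R x z"
    if "Q f1 = 1" "Q f2 = 1" for f1 f2
    using sum_sq_le_resistance_if_cut[OF _ _ _ _ that] by (simp add: ennreal_plus)
  define F where "F = {f. Q f = 1}"
  have "F \<noteq> {}" unfolding F_def using ex_unit_energy by blast
  have "R x y + R y z = (SUP f1\<in>F. ennreal ((f1 y - f1 x)\<^sup>2) + R y z)"
    unfolding resistance_def[of b x y] F_def[symmetric] by (rule ennreal_SUP_add_left[OF \<open>F \<noteq> {}\<close>, symmetric])
  also have "\<dots> \<le> R x z"
  proof (rule SUP_least)
    fix f1 assume "f1 \<in> F"
    have "ennreal ((f1 y - f1 x)\<^sup>2) + R y z = (SUP f2\<in>F. ennreal ((f1 y - f1 x)\<^sup>2) + ennreal ((f2 z - f2 y)\<^sup>2))"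
      unfolding resistance_def[of b y z] F_def[symmetric] by (rule ennreal_SUP_add_right[OF \<open>F \<noteq> {}\<close>])
    also have "\<dots> \<le> R x z"
      using glue \<open>f1 \<in> F\<close> unfolding F_def by (intro SUP_least) auto
    finally show "ennreal ((f1 y - f1 x)\<^sup>2) + R y z \<le> R x z" .
  qed
  finally show ?thesis .
qed

lemma exists_potential_energy_less:
  assumes "R x z = ennreal r" "0 < r" "0 < \<epsilon>"
  shows "\<exists>f. f x = 0 \<and> f z = 1 \<and> Q f < ennreal (1 / r + \<epsilon>)"
proof -
  define \<theta> where "\<theta> = 1 / (1 / r + \<epsilon>)"
  have "0 < \<theta>" using assms(2,3) by (simp add: \<theta>_def add_pos_pos)
  have "\<theta> < 1 / (1 / r)"
    unfolding \<theta>_def using assms(2,3) by (intro divide_strict_left_mono) (simp_all add: add_pos_pos)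
  then have "\<theta> < r" by simp
  then have "ennreal \<theta> < R x z" using assms(1,2) \<open>0 < \<theta>\<close> by (simp add: ennreal_less_iff)
  then obtain f where f: "Q f = 1" and "ennreal \<theta> < ennreal ((f z - f x)\<^sup>2)"
    unfolding resistance_def by (auto simp: less_SUP_iff)
  then have "\<theta> < (f z - f x)\<^sup>2" using \<open>0 < \<theta>\<close> by (simp add: ennreal_less_iff)
  define d where "d = f z - f x"
  have "\<theta> < d\<^sup>2" "d \<noteq> 0" using \<open>\<theta> < (f z - f x)\<^sup>2\<close> \<open>0 < \<theta>\<close> by (auto simp: d_def)
  define h where "h v = (1 / d) * f v + (- f x / d)" for v
  have "h z = (f z - f x) / d" by (simp add: h_def diff_divide_distrib)
  then have "h x = 0" "h z = 1" using \<open>d \<noteq> 0\<close> by (simp_all add: h_def d_def[symmetric])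
  moreover have "Q h = ennreal (1 / d\<^sup>2)"
    unfolding h_def energy_scale f by (simp add: power_divide)
  moreover have "1 / d\<^sup>2 < 1 / \<theta>"
    using \<open>\<theta> < d\<^sup>2\<close> \<open>0 < \<theta>\<close> by (intro frac_less2) simp_all
  then have "1 / d\<^sup>2 < 1 / r + \<epsilon>" by (simp add: \<theta>_def)
  ultimately show ?thesis using \<open>d \<noteq> 0\<close> by (auto simp: ennreal_less_iff)
qed

lemma clamp_near_minimiser:
  assumes a: "R x y = ennreal a" "0 < a" and c: "R y z = ennreal c" "0 < c" and "0 \<le> \<epsilon>"
    and f: "f x = 0" "f z = 1" "Q f < ennreal (1 / (a + c) + \<epsilon>)"
  defines "s \<equiv> clamp 0 1 (f y)"
  shows "near_minimiser \<epsilon> x y (\<lambda>v. clamp 0 s (f v))"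
    and "((a + c) * s - a)\<^sup>2 \<le> \<epsilon> * (a * c * (a + c))"
proof -
  have s: "0 \<le> s" "s \<le> 1" by (simp_all add: s_def clamp_real)
  define g1 where "g1 v = clamp 0 s (f v)" for v
  define g2 where "g2 v = clamp s 1 (f v)" for v
  obtain F where F: "Q f = ennreal F" "0 \<le> F" "F < 1 / (a + c) + \<epsilon>"
    using f(3) by (cases "Q f") (auto simp: ennreal_less_iff)
  have "Q g1 + Q g2 \<le> ennreal F"
    using energy_clamp_add_le[OF s, of f] F(1) unfolding g1_def g2_def by simp
  note energies = enn2real_add_le_if_add_le[OF this F(2)]
  have clamped_at: "g1 x = 0" "g1 y = s" "g1 z = s" "g2 y = s" "g2 z = 1"
    using s f(1,2) by (auto simp: g1_def g2_def s_def clamp_real)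
  have "s\<^sup>2 \<le> a * enn2real (Q g1)" "(1 - s)\<^sup>2 \<le> c * enn2real (Q g2)"
    using sq_diff_le_resistance_energy[of x y g1] sq_diff_le_resistance_energy[of y z g2] a c energies
    by (simp_all add: clamped_at)
  note optimal = series_split_near_optimal[OF a(2) c(2) this le_less_trans[OF energies(3) F(3)]]
  show "((a + c) * s - a)\<^sup>2 \<le> \<epsilon> * (a * c * (a + c))" by (fact optimal(2))
  have "Q g1 \<le> Q h + ennreal \<epsilon>" if "h x = g1 x" "h y = g1 y" for h
  proof (cases "Q h = \<infinity>")
    case False
    then have "s\<^sup>2 \<le> a * enn2real (Q h)"
      using sq_diff_le_resistance_energy[of x y h] a that by (simp add: clamped_at less_top)
    then have "s\<^sup>2 / a \<le> enn2real (Q h)"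
      using a(2) by (simp add: pos_divide_le_eq mult.commute)
    then have "enn2real (Q g1) \<le> enn2real (Q h) + \<epsilon>"
      using optimal(1) by linarith
    then have "ennreal (enn2real (Q g1)) \<le> ennreal (enn2real (Q h) + \<epsilon>)" by (rule ennreal_leI)
    then show ?thesis using energies(1) False \<open>0 \<le> \<epsilon>\<close> by (simp add: ennreal_plus less_top)
  qed simp
  then show "near_minimiser \<epsilon> x y (\<lambda>v. clamp 0 s (f v))"
    using energies(1) unfolding near_minimiser_def g1_def by simp
qed

lemma series_eq_imp_le_sqrt:
  assumes a: "R x y = ennreal a" "0 < a" and c: "R y z = ennreal c" "0 < c"
    and ac: "R x z = ennreal (a + c)"
    and q: "is_path b z x q" "y \<notin> set q" and \<epsilon>: "0 < \<epsilon>"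
  shows "a \<le> sqrt \<epsilon> * ((a + c) * \<bar>descent_bound q (length q - 1)\<bar> + sqrt (a * c * (a + c)))"
proof -
  define K where "K = descent_bound q (length q - 1)"
  obtain f where f: "f x = 0" "f z = 1" "Q f < ennreal (1 / (a + c) + \<epsilon>)"
    using exists_potential_energy_less[OF ac _ \<epsilon>] a(2) c(2) by auto
  define s where "s = clamp 0 1 (f y)"
  define g where "g v = clamp 0 s (f v)" for v
  have s: "0 \<le> s" "s \<le> 1" by (simp_all add: s_def clamp_real)
  note near = clamp_near_minimiser[OF a c less_imp_le[OF \<epsilon>] f, folded s_def g_def]
  have "g x = 0" "g z = s" "\<And>w. 0 \<le> g w" "\<And>w. g w \<le> g z"
    using s f(1,2) by (auto simp: g_def clamp_real)
  moreover have "q ! (length q - 1) = x"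
    using q(1) unfolding is_path_def by (metis last_conv_nth)
  moreover have "0 < length q" using q(1) unfolding is_path_def by simp
  ultimately have "s \<le> K * sqrt \<epsilon>"
    using near_minimiser_max_along_path[OF near(1) less_imp_le[OF \<epsilon>] _ _ q, of "length q - 1"]
    by (simp add: K_def)
  also have "\<dots> \<le> \<bar>K\<bar> * sqrt \<epsilon>" using \<epsilon> by (intro mult_right_mono) simp_all
  finally have "(a + c) * s \<le> (a + c) * \<bar>K\<bar> * sqrt \<epsilon>"
    using a(2) c(2) by (simp add: mult.assoc mult_left_mono)
  moreover have "a - (a + c) * s \<le> sqrt \<epsilon> * sqrt (a * c * (a + c))"
    using real_sqrt_le_mono[OF near(2)] by (simp add: real_sqrt_mult real_sqrt_abs abs_le_iff)
  ultimately show ?thesis by (simp add: K_def algebra_simps)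
qed

lemma resistance_ne_series_if_path_avoids:
  assumes p: "is_path b x z p" "y \<notin> set p"
  shows "R x z \<noteq> R x y + R y z"
proof
  assume series: "R x z = R x y + R y z"
  have "x \<noteq> y" "y \<noteq> z" using p unfolding is_path_def by (auto dest: hd_in_set last_in_set)
  have "R x y < \<infinity>" "R y z < \<infinity>"
    using resistance_finite_if_path[OF p(1)] unfolding series by simp_all
  then obtain a c where a: "R x y = ennreal a" "0 < a" and c: "R y z = ennreal c" "0 < c"
    using resistance_pos[OF \<open>x \<noteq> y\<close>] resistance_pos[OF \<open>y \<noteq> z\<close>]
    by (cases "R x y"; cases "R y z") (auto simp: ennreal_less_iff)
  have ac: "R x z = ennreal (a + c)" using series a c by (simp add: ennreal_plus)
  define q where "q = rev p"
  have q: "is_path b z x q" "y \<notin> set q" using is_path_rev[OF p(1)] p(2) by (simp_all add: q_def)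
  define C where "C = (a + c) * \<bar>descent_bound q (length q - 1)\<bar> + sqrt (a * c * (a + c))"
  have "0 < C" using a(2) c(2) by (simp add: C_def add_nonneg_pos)
  have "a \<le> sqrt ((a / (2 * C))\<^sup>2) * C"
    using series_eq_imp_le_sqrt[OF a c ac q, of "(a / (2 * C))\<^sup>2"] a(2) \<open>0 < C\<close> by (simp add: C_def)
  also have "\<dots> = a / 2" using a(2) \<open>0 < C\<close> by simp
  finally show False using a(2) by simp
qed

end

theorem proposition3p2:
  fixes b :: "'a::countable \<Rightarrow> 'a \<Rightarrow> real" and x y z :: 'a
  assumes "is_graph b"
    and "\<exists>u v. 0 < b u v"
  shows "resistance b x z = resistance b x y + resistance b y z
     \<longleftrightarrow> (\<forall>p. is_path b x z p \<longrightarrow> y \<in> set p)"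
proof
  interpret nontrivial_graph b using assms by unfold_locales
  show "\<forall>p. is_path b x z p \<longrightarrow> y \<in> set p" if "R x z = R x y + R y z"
    using that resistance_ne_series_if_path_avoids by blast
  show "R x z = R x y + R y z" if through: "\<forall>p. is_path b x z p \<longrightarrow> y \<in> set p"
  proof (cases "y = x")
    case False
    show ?thesis by (rule antisym[OF resistance_triangle resistance_series[OF False through]])
  qed simp
qed

end
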